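(* Let $\mathcal C$ be a category of partitions and $p\in P(0,l)$, written as a word $p=a_{i(1)}^{k_1}a_{i(2)}^{k_2}\cdots a_{i(n)}^{k_n}$ with $k_j\ge 1$ and $a_{i(j)}\neq a_{i(j+1)}$ for $j=1,\dots,n-1$. (a) Put $k_j'=1$ if $k_j$ is odd and $k_j'=2$ if $k_j$ is even, and $p'=a_{i(1)}^{k_1'}\cdots a_{i(n)}^{k_n'}$. If $b_4\in\mathcal C$, then $p\in\mathcal C$ if and only if $p'\in\mathcal C$. (b) Put $k_j''=1$ if $k_j$ is odd and $k_j''=0$ if $k_j$ is even, and $p''=a_{i(1)}^{k_1''}\cdots a_{i(n)}^{k_n''}$ (possibly the empty partition $\emptyset$). If $\rho\in\mathcal C$, then $p\in\mathcal C$ if and only if $p''\in\mathcal C$.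
   Context: A partition $p\in P(k,l)$ ($k,l\ge 0$) is a partition of the disjoint union of $k$ ordered upper points $1,\dots,k$ and $l$ ordered lower points $1',\dots,l'$ into nonempty disjoint subsets called blocks; $P=\bigcup_{k,l}P(k,l)$, and $\emptyset\in P(0,0)$ is the empty partition, which belongs to every category of partitions. Operations on partitions: the tensor product $p\otimes q$ (horizontal juxtaposition, $q$ placed to the right of $p$); the composition of $p\in P(k,l)$ with $q\in P(l,m)$ (stack $p$ on top of $q$, identify the lower points of $p$ with the upper points of $q$, merge blocks connected through these middle points, then erase the middle points and any block lying entirely among them), giving a partition in $P(k,m)$; the involution $p^*$ (reflection of $p$ upside down); and rotation (moving the leftmost, resp. rightmost, point of one row to the leftmost, resp. rightmost, position of the other row, keeping the blocks). A category of partitions is a subset $\mathcal C\subseteq P$ containing the pair partition $\sqcap\in P(0,2)$ (one block consisting of two lower points) and the identity partition $|\in P(1,1)$ (one block $\{1,1'\}$), and closed under these four operations. Special partitions: the four block $b_4\in P(0,4)$ (one block of four lower points); the pair positioner $\rho\in P(3,3)$ with blocks $\{1,2,2',3'\}$ and $\{3,1'\}$. Words: a partition $p\in P(0,l)$ is identified with a word $x_1x_2\cdots x_l$ of length $l$ in letters $a_1,a_2,\dots$, where the lower points $1,\dots,l$ (left to right) are labelled by letters, two points carrying the same letter if and only if they lie in the same block; conversely every word of length $l$ defines a partition in $P(0,l)$ in this way. Exponent notation $a^k$ means $k$ consecutive points labelled $a$. *)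

theory Defs
  imports "HOL-Library.Disjoint_Sets"
begin

text \<open>A point is (False, i) for the upper point i+1 and (True, j) for the lower
point (j+1)'; indices are 0-based. A partition in P(k,l) is a triple (k, l, B)
where B is a set partition (set of nonempty disjoint blocks) of the k+l points.\<close>

type_synonym point = "bool \<times> nat"
type_synonym partition = "nat \<times> nat \<times> point set set"

definition upp :: "partition \<Rightarrow> nat" where "upp p = fst p"
definition low :: "partition \<Rightarrow> nat" where "low p = fst (snd p)"
definition blk :: "partition \<Rightarrow> point set set" where "blk p = snd (snd p)"

definition pts :: "nat \<Rightarrow> nat \<Rightarrow> point set" where
  "pts k l = {(False, i) | i. i < k} \<union> {(True, j) | j. j < l}"

definition is_part :: "partition \<Rightarrow> bool" where
  "is_part p \<longleftrightarrow> partition_on (pts (upp p) (low p)) (blk p)"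

definition shift_pt :: "nat \<Rightarrow> nat \<Rightarrow> point \<Rightarrow> point" where
  "shift_pt k l x = (if fst x then (True, snd x + l) else (False, snd x + k))"

definition tensor :: "partition \<Rightarrow> partition \<Rightarrow> partition" where
  "tensor p q = (upp p + upp q, low p + low q,
      blk p \<union> (\<lambda>X. shift_pt (upp p) (low p) ` X) ` blk q)"

definition invol :: "partition \<Rightarrow> partition" where
  "invol p = (low p, upp p, (\<lambda>X. (\<lambda>x. (\<not> fst x, snd x)) ` X) ` blk p)"

text \<open>Composition of p in P(k,l) (on top) with q in P(l,m) (below).
Points of the stacked picture: (0,i) upper of p, (1,j) middle, (2,t) lower of q.\<close>
definition emb_top :: "point \<Rightarrow> nat \<times> nat" where
  "emb_top x = (if fst x then (1, snd x) else (0, snd x))"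
definition emb_bot :: "point \<Rightarrow> nat \<times> nat" where
  "emb_bot x = (if fst x then (2, snd x) else (1, snd x))"
definition emb_res :: "point \<Rightarrow> nat \<times> nat" where
  "emb_res x = (if fst x then (2, snd x) else (0, snd x))"

definition block_rel :: "(point \<Rightarrow> nat \<times> nat) \<Rightarrow> point set set \<Rightarrow> ((nat \<times> nat) \<times> (nat \<times> nat)) set" where
  "block_rel e B = {(e x, e y) | x y. \<exists>X\<in>B. x \<in> X \<and> y \<in> X}"

definition comp :: "partition \<Rightarrow> partition \<Rightarrow> partition" where
  "comp p q = (upp p, low q,
     pts (upp p) (low q) //
       {(x, y). x \<in> pts (upp p) (low q) \<and> y \<in> pts (upp p) (low q) \<and>
          (emb_res x, emb_res y) \<in> (block_rel emb_top (blk p) \<union> block_rel emb_bot (blk q))\<^sup>*})"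

text \<open>Rotations (each applied when the row from which the point is taken is nonempty).\<close>
definition rot_map :: "(point \<Rightarrow> point) \<Rightarrow> nat \<Rightarrow> nat \<Rightarrow> partition \<Rightarrow> partition" where
  "rot_map f k l p = (k, l, (\<lambda>X. f ` X) ` blk p)"

definition rot_left_down :: "partition \<Rightarrow> partition" where
  "rot_left_down p = rot_map (\<lambda>x. if x = (False, 0) then (True, 0)
      else if fst x then (True, snd x + 1) else (False, snd x - 1))
      (upp p - 1) (low p + 1) p"

definition rot_left_up :: "partition \<Rightarrow> partition" where
  "rot_left_up p = rot_map (\<lambda>x. if x = (True, 0) then (False, 0)
      else if fst x then (True, snd x - 1) else (False, snd x + 1))
      (upp p + 1) (low p - 1) p"

definition rot_right_down :: "partition \<Rightarrow> partition" where
  "rot_right_down p = rot_map (\<lambda>x. if x = (False, upp p - 1) then (True, low p) else x)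
      (upp p - 1) (low p + 1) p"

definition rot_right_up :: "partition \<Rightarrow> partition" where
  "rot_right_up p = rot_map (\<lambda>x. if x = (True, low p - 1) then (False, upp p) else x)
      (upp p + 1) (low p - 1) p"

definition pair_part :: partition where
  "pair_part = (0, 2, {{(True, 0), (True, 1)}})"
definition id_part :: partition where
  "id_part = (1, 1, {{(False, 0), (True, 0)}})"
definition four_block :: partition where
  "four_block = (0, 4, {{(True, 0), (True, 1), (True, 2), (True, 3)}})"
definition pair_positioner :: partition where
  "pair_positioner = (3, 3, {{(False, 0), (False, 1), (True, 1), (True, 2)},
                             {(False, 2), (True, 0)}})"

definition category_of_partitions :: "partition set \<Rightarrow> bool" where
  "category_of_partitions C \<longleftrightarrow>
     (\<forall>p\<in>C. is_part p) \<and> pair_part \<in> C \<and> id_part \<in> C \<and>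
     (\<forall>p\<in>C. \<forall>q\<in>C. tensor p q \<in> C) \<and>
     (\<forall>p\<in>C. \<forall>q\<in>C. low p = upp q \<longrightarrow> comp p q \<in> C) \<and>
     (\<forall>p\<in>C. invol p \<in> C) \<and>
     (\<forall>p\<in>C. upp p \<ge> 1 \<longrightarrow> rot_left_down p \<in> C \<and> rot_right_down p \<in> C) \<and>
     (\<forall>p\<in>C. low p \<ge> 1 \<longrightarrow> rot_left_up p \<in> C \<and> rot_right_up p \<in> C)"

text \<open>Words: a word of letters (natural numbers) defines a partition in P(0, length w):
lower points with the same letter form a block.\<close>
definition word_part :: "nat list \<Rightarrow> partition" where
  "word_part w = (0, length w,
     {{(True, j) | j. j < length w \<and> w ! j = a} | a. a \<in> set w})"

definition exp_word :: "nat list \<Rightarrow> nat list \<Rightarrow> nat list" where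
  "exp_word xs ks = concat (map2 (\<lambda>a k. replicate k a) xs ks)"

end

theory Submission
  imports Defs
begin

text \<open>If a word lies in C, so does every word obtained from it by composing with
  id^{\<otimes>i} \<otimes> q for some q \<in> C, and rotations let such a rewrite act anywhere in
  the word. The reflected pair partition deletes a factor a a, so runs can be shortened by two.
  The rotated four block rewrites a into a a a, and so does the pair positioner, which turns x y z
  into z' x x (z' being z with y renamed to x), applied to a c c with c fresh; so in both cases
  runs can also be lengthened by two. With the pair positioner a factor a a can moreover be
  inserted anywhere: directly if a is fresh, and otherwise by tripling an occurrence of a and
  moving the extra pair along the word.\<close>

lemma upp_simp [simp]: "upp (k, l, B) = k" by (simp add: upp_def)
lemma low_simp [simp]: "low (k, l, B) = l" by (simp add: low_def)
lemma blk_simp [simp]: "blk (k, l, B) = B" by (simp add: blk_def)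

definition idn :: "nat \<Rightarrow> partition" where
  "idn n = (n, n, {{(False, t), (True, t)} | t. t < n})"

lemma empty_part_in:
  assumes "category_of_partitions C"
  shows "(0, 0, {}) \<in> C"
proof -
  have "pair_part \<in> C" "invol pair_part \<in> C" "low pair_part = upp (invol pair_part)"
    using assms by (auto simp: category_of_partitions_def pair_part_def invol_def)
  then have "comp pair_part (invol pair_part) \<in> C"
    using assms unfolding category_of_partitions_def by blast
  moreover have "comp pair_part (invol pair_part) = (0, 0, {})"
    by (simp add: comp_def pair_part_def invol_def pts_def)
  ultimately show ?thesis by simp
qed

lemma idn_in:
  assumes C: "category_of_partitions C"
  shows "idn n \<in> C"
proof (induction n)
  case 0
  then show ?case using empty_part_in[OF C] by (simp add: idn_def)
next
  case (Suc n)
  then have "tensor (idn n) id_part \<in> C" using C unfolding category_of_partitions_def by blast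
  moreover have "tensor (idn n) id_part = idn (Suc n)"
    by (auto simp: tensor_def idn_def id_part_def shift_pt_def less_Suc_eq)
  ultimately show ?case by simp
qed

lemma comp_tensor_idn_in:
  assumes C: "category_of_partitions C" and "p \<in> C" "q \<in> C" "low p = i + upp q"
  shows "comp p (tensor (idn i) q) \<in> C"
proof -
  have "tensor (idn i) q \<in> C" using C \<open>q \<in> C\<close> idn_in[OF C] unfolding category_of_partitions_def by blast
  moreover have "low p = upp (tensor (idn i) q)" using \<open>low p = i + upp q\<close> by (simp add: tensor_def idn_def)
  ultimately show ?thesis using C \<open>p \<in> C\<close> unfolding category_of_partitions_def by blast
qed

definition stack_rel :: "partition \<Rightarrow> partition \<Rightarrow> ((nat \<times> nat) \<times> (nat \<times> nat)) set" where
  "stack_rel p q = block_rel emb_top (blk p) \<union> block_rel emb_bot (blk q)"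

lemma block_relI: "X \<in> B \<Longrightarrow> x \<in> X \<Longrightarrow> y \<in> X \<Longrightarrow> (e x, e y) \<in> block_rel e B"
  unfolding block_rel_def by blast

lemma block_relE:
  assumes "(a, b) \<in> block_rel e B"
  obtains X x y where "X \<in> B" "x \<in> X" "y \<in> X" "a = e x" "b = e y"
  using assms unfolding block_rel_def by blast

lemma sym_stack_rel: "sym (stack_rel p q)"
  by (rule symI) (auto simp: stack_rel_def block_rel_def)

lemma pts_0: "pts 0 n = {(True, j) | j. j < n}"
  by (auto simp: pts_def)

lemma blk_word_part: "blk (word_part w) = (\<lambda>b. {(True, j) | j. j < length w \<and> w ! j = b}) ` set w"
  by (simp add: word_part_def Setcompr_eq_image)

lemma word_part_quotient:
  "pts 0 (length w) // {(x, y). x \<in> pts 0 (length w) \<and> y \<in> pts 0 (length w) \<and> w ! snd x = w ! snd y}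
   = blk (word_part w)"
  (is "pts 0 ?n // ?R = _")
proof -
  have cls: "?R `` {(True, t)} = {(True, j) | j. j < ?n \<and> w ! j = w ! t}" if "t < ?n" for t
    using that by (auto simp: pts_0)
  have "pts 0 ?n // ?R = (\<lambda>t. ?R `` {(True, t)}) ` {..<?n}"
    by (auto simp: quotient_def pts_0)
  also have "\<dots> = (\<lambda>t. {(True, j) | j. j < ?n \<and> w ! j = w ! t}) ` {..<?n}"
    by (rule image_cong[OF refl cls]) simp
  also have "\<dots> = (\<lambda>a. {(True, j) | j. j < ?n \<and> w ! j = a}) ` set w"
    by (auto simp: set_conv_nth)
  finally show ?thesis by (simp add: blk_word_part)
qed

lemma comp_eq_word_part:
  fixes L :: "nat \<times> nat \<Rightarrow> nat"
  assumes "upp p = 0" "low q = length w"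
    and label: "\<And>a b. (a, b) \<in> stack_rel p q \<Longrightarrow> L a = L b"
    and bottom: "\<And>t. t < length w \<Longrightarrow> L (2, t) = w ! t"
    and joined: "\<And>t t'. t < length w \<Longrightarrow> t' < length w \<Longrightarrow> w ! t = w ! t' \<Longrightarrow>
                   ((2, t), (2, t')) \<in> (stack_rel p q)\<^sup>*"
  shows "comp p q = word_part w"
proof -
  have label_star: "L a = L b" if "(a, b) \<in> (stack_rel p q)\<^sup>*" for a b
    using that by induction (auto dest: label)
  let ?P = "pts 0 (length w)"
  have "{(x, y). x \<in> ?P \<and> y \<in> ?P \<and> (emb_res x, emb_res y) \<in> (stack_rel p q)\<^sup>*}
      = {(x, y). x \<in> ?P \<and> y \<in> ?P \<and> w ! snd x = w ! snd y}"
  proof (intro set_eqI iffI)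
    fix z assume "z \<in> {(x, y). x \<in> ?P \<and> y \<in> ?P \<and> (emb_res x, emb_res y) \<in> (stack_rel p q)\<^sup>*}"
    then obtain t t' where "z = ((True, t), (True, t'))" "t < length w" "t' < length w"
        "((2, t), (2, t')) \<in> (stack_rel p q)\<^sup>*"
      by (auto simp: pts_0 emb_res_def)
    then show "z \<in> {(x, y). x \<in> ?P \<and> y \<in> ?P \<and> w ! snd x = w ! snd y}"
      using label_star bottom by (force simp: pts_0)
  next
    fix z assume "z \<in> {(x, y). x \<in> ?P \<and> y \<in> ?P \<and> w ! snd x = w ! snd y}"
    then obtain t t' where "z = ((True, t), (True, t'))" "t < length w" "t' < length w" "w ! t = w ! t'"
      by (auto simp: pts_0)
    then show "z \<in> {(x, y). x \<in> ?P \<and> y \<in> ?P \<and> (emb_res x, emb_res y) \<in> (stack_rel p q)\<^sup>*}"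
      using joined by (simp add: pts_0 emb_res_def)
  qed
  then have "comp p q = (0, length w, ?P // {(x, y). x \<in> ?P \<and> y \<in> ?P \<and> w ! snd x = w ! snd y})"
    using assms(1,2) by (simp add: comp_def stack_rel_def)
  then show ?thesis
    by (simp add: word_part_quotient) (simp add: word_part_def)
qed

lemma blk_tensor_idn:
  "blk (tensor (idn i) q) = {{(False, t), (True, t)} | t. t < i} \<union> (\<lambda>X. shift_pt i i ` X) ` blk q"
  by (simp add: tensor_def idn_def)

lemma emb_bot_shift_pt:
  "emb_bot (shift_pt i i x) = (if fst x then (2, i + snd x) else (1, i + snd x))"
  by (simp add: emb_bot_def shift_pt_def)

lemma stack_rel_word_tensor_idn:
  shows stack_rel_word_letter: "j < length w \<Longrightarrow> j' < length w \<Longrightarrow> w ! j = w ! j' \<Longrightarrow>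
      ((1, j), (1, j')) \<in> stack_rel (word_part w) (tensor (idn i) q)"
    and stack_rel_idn: "t < i \<Longrightarrow> ((2, t), (1, t)) \<in> stack_rel (word_part w) (tensor (idn i) q)"
    and stack_rel_block: "X \<in> blk q \<Longrightarrow> x \<in> X \<Longrightarrow> y \<in> X \<Longrightarrow>
      (emb_bot (shift_pt i i x), emb_bot (shift_pt i i y)) \<in> stack_rel (word_part w) (tensor (idn i) q)"
proof -
  assume "j < length w" "j' < length w" "w ! j = w ! j'"
  then have "(emb_top (True, j), emb_top (True, j')) \<in> block_rel emb_top (blk (word_part w))"
    by (intro block_relI[of "{(True, s) | s. s < length w \<and> w ! s = w ! j}"]) (auto simp: word_part_def)
  then show "((1, j), (1, j')) \<in> stack_rel (word_part w) (tensor (idn i) q)"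
    by (simp add: stack_rel_def emb_top_def)
next
  assume "t < i"
  then have "(emb_bot (True, t), emb_bot (False, t)) \<in> block_rel emb_bot (blk (tensor (idn i) q))"
    by (intro block_relI[of "{(False, t), (True, t)}"]) (auto simp: blk_tensor_idn)
  then show "((2, t), (1, t)) \<in> stack_rel (word_part w) (tensor (idn i) q)"
    by (simp add: stack_rel_def emb_bot_def)
next
  assume "X \<in> blk q" "x \<in> X" "y \<in> X"
  then show "(emb_bot (shift_pt i i x), emb_bot (shift_pt i i y)) \<in> stack_rel (word_part w) (tensor (idn i) q)"
    unfolding stack_rel_def by (intro UnI2 block_relI[of "shift_pt i i ` X"]) (auto simp: blk_tensor_idn)
qed

definition middle_links :: "nat list \<Rightarrow> nat \<Rightarrow> partition \<Rightarrow> (nat \<times> nat) set" where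
  "middle_links w i q = {(j, j'). j < length w \<and> j' < length w \<and> w ! j = w ! j'}
     \<union> {(i + k, i + k') | k k'. \<exists>X\<in>blk q. (False, k) \<in> X \<and> (False, k') \<in> X}"

lemma middle_links_letter:
  "j < length w \<Longrightarrow> j' < length w \<Longrightarrow> w ! j = w ! j' \<Longrightarrow> (j, j') \<in> (middle_links w i q)\<^sup>*"
  by (auto simp: middle_links_def)

lemma middle_links_stack_rel:
  assumes "(j, j') \<in> (middle_links w i q)\<^sup>*"
  shows "((1, j), (1, j')) \<in> (stack_rel (word_part w) (tensor (idn i) q))\<^sup>*"
  using assms
proof induction
  case (step j' j'')
  from step.hyps(2) have "((1, j'), (1, j'')) \<in> stack_rel (word_part w) (tensor (idn i) q)"
    unfolding middle_links_def
    using stack_rel_word_letter[of _ w _ i q] stack_rel_block[of _ q "(False, _)" "(False, _)" i w]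
    by (auto simp: emb_bot_shift_pt)
  with step.IH show ?case by (rule rtrancl_into_rtrancl)
qed simp

definition tail_label :: "(nat \<Rightarrow> nat) \<Rightarrow> nat list \<Rightarrow> nat list \<Rightarrow> nat \<Rightarrow> point \<Rightarrow> nat" where
  "tail_label \<phi> w w' i x = (if fst x then w' ! (i + snd x) else \<phi> (w ! (i + snd x)))"

definition stack_label :: "(nat \<Rightarrow> nat) \<Rightarrow> nat list \<Rightarrow> nat list \<Rightarrow> nat \<times> nat \<Rightarrow> nat" where
  "stack_label \<phi> w w' = (\<lambda>(n, j). if n = 1 then \<phi> (w ! j) else w' ! j)"

lemma stack_label_invariant:
  assumes prefix: "\<And>t. t < i \<Longrightarrow> w' ! t = \<phi> (w ! t)"
    and blocks: "\<And>X x y. X \<in> blk q \<Longrightarrow> x \<in> X \<Longrightarrow> y \<in> X \<Longrightarrow>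
                   tail_label \<phi> w w' i x = tail_label \<phi> w w' i y"
    and ab: "(a, b) \<in> stack_rel (word_part w) (tensor (idn i) q)"
  shows "stack_label \<phi> w w' a = stack_label \<phi> w w' b"
proof (cases "(a, b) \<in> block_rel emb_top (blk (word_part w))")
  case True
  then show ?thesis by (auto elim!: block_relE simp: word_part_def emb_top_def stack_label_def)
next
  case False
  with ab obtain X x y where X: "X \<in> blk (tensor (idn i) q)" "x \<in> X" "y \<in> X" "a = emb_bot x" "b = emb_bot y"
    unfolding stack_rel_def by (blast elim: block_relE)
  from X(1) consider (idn) t where "t < i" "X = {(False, t), (True, t)}"
    | (shifted) Y where "Y \<in> blk q" "X = shift_pt i i ` Y"
    unfolding blk_tensor_idn by blast
  then show ?thesis
  proof cases
    case idn
    then show ?thesis using X(2-5) prefix[OF idn(1)] by (auto simp: emb_bot_def stack_label_def)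
  next
    case shifted
    then obtain x0 y0 where xy: "x0 \<in> Y" "y0 \<in> Y" "x = shift_pt i i x0" "y = shift_pt i i y0"
      using X(2,3) by blast
    have "stack_label \<phi> w w' (emb_bot (shift_pt i i v)) = tail_label \<phi> w w' i v" for v
      by (simp add: stack_label_def emb_bot_shift_pt tail_label_def)
    then show ?thesis using X(4,5) xy blocks[OF shifted(1) xy(1,2)] by simp
  qed
qed

lemma stack_rel_anchor:
  assumes len: "length w = i + upp q" "length w' = i + low q"
    and prefix: "\<And>t. t < i \<Longrightarrow> w' ! t = \<phi> (w ! t)"
    and blocks: "\<And>X x y. X \<in> blk q \<Longrightarrow> x \<in> X \<Longrightarrow> y \<in> X \<Longrightarrow>
                   tail_label \<phi> w w' i x = tail_label \<phi> w w' i y"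
    and through: "\<And>k. k < low q \<Longrightarrow> \<exists>X\<in>blk q. \<exists>k'<upp q. (True, k) \<in> X \<and> (False, k') \<in> X"
    and "t < length w'"
  obtains j where "j < length w" "((2, t), (1, j)) \<in> stack_rel (word_part w) (tensor (idn i) q)"
    "w' ! t = \<phi> (w ! j)"
proof (cases "t < i")
  case True
  then show ?thesis using len by (intro that[OF _ stack_rel_idn[OF True] prefix[OF True]]) simp
next
  case False
  with \<open>t < length w'\<close> len obtain k where k: "t = i + k" "k < low q"
    by (metis add_diff_inverse_nat add_less_cancel_left)
  then obtain X k' where X: "X \<in> blk q" "k' < upp q" "(True, k) \<in> X" "(False, k') \<in> X"
    using through by blast
  have "((2, t), (1, i + k')) \<in> stack_rel (word_part w) (tensor (idn i) q)"
    using stack_rel_block[OF X(1,3,4), of i w] k(1) by (simp add: emb_bot_shift_pt)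
  moreover have "w' ! t = \<phi> (w ! (i + k'))"
    using blocks[OF X(1,3,4)] k(1) by (simp add: tail_label_def)
  ultimately show ?thesis using X(2) len(1) by (intro that) simp_all
qed

text \<open>Here q acts on the letters of w after position i, and \<phi> describes how it merges letters.\<close>

lemma comp_word_part_tensor_idn:
  fixes \<phi> :: "nat \<Rightarrow> nat"
  assumes len: "length w = i + upp q" "length w' = i + low q"
    and prefix: "\<And>t. t < i \<Longrightarrow> w' ! t = \<phi> (w ! t)"
    and blocks: "\<And>X x y. X \<in> blk q \<Longrightarrow> x \<in> X \<Longrightarrow> y \<in> X \<Longrightarrow>
                   tail_label \<phi> w w' i x = tail_label \<phi> w w' i y"
    and through: "\<And>k. k < low q \<Longrightarrow> \<exists>X\<in>blk q. \<exists>k'<upp q. (True, k) \<in> X \<and> (False, k') \<in> X"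
    and merged: "\<And>j j'. j < length w \<Longrightarrow> j' < length w \<Longrightarrow> w ! j \<noteq> w ! j' \<Longrightarrow>
                   \<phi> (w ! j) = \<phi> (w ! j') \<Longrightarrow> (j, j') \<in> (middle_links w i q)\<^sup>*"
  shows "comp (word_part w) (tensor (idn i) q) = word_part w'"
proof (rule comp_eq_word_part[where L = "stack_label \<phi> w w'"])
  let ?R = "stack_rel (word_part w) (tensor (idn i) q)"
  show "upp (word_part w) = 0" "low (tensor (idn i) q) = length w'"
    using len by (simp_all add: word_part_def tensor_def idn_def)
  show "stack_label \<phi> w w' (2, t) = w' ! t" for t by (simp add: stack_label_def)
  show "stack_label \<phi> w w' a = stack_label \<phi> w w' b" if "(a, b) \<in> ?R" for a b
    using stack_label_invariant[OF prefix blocks that] .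
  fix t t' assume t: "t < length w'" "t' < length w'" "w' ! t = w' ! t'"
  obtain j where j: "j < length w" "((2, t), (1, j)) \<in> ?R" "w' ! t = \<phi> (w ! j)"
    using stack_rel_anchor[OF len prefix blocks through t(1)] .
  obtain j' where j': "j' < length w" "((2, t'), (1, j')) \<in> ?R" "w' ! t' = \<phi> (w ! j')"
    using stack_rel_anchor[OF len prefix blocks through t(2)] .
  have "(j, j') \<in> (middle_links w i q)\<^sup>*"
  proof (cases "w ! j = w ! j'")
    case True
    then show ?thesis using j(1) j'(1) by (rule middle_links_letter[rotated 2])
  next
    case False
    then show ?thesis using merged[OF j(1) j'(1)] j(3) j'(3) t(3) by simp
  qed
  then have "((1, j), (1, j')) \<in> ?R\<^sup>*" by (rule middle_links_stack_rel)
  moreover have "((1, j'), (2, t')) \<in> ?R" using j'(2) sym_stack_rel by (rule symD[rotated])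
  ultimately show "((2, t), (2, t')) \<in> ?R\<^sup>*"
    using j(2) by (meson converse_rtrancl_into_rtrancl rtrancl.simps)
qed

lemma word_part_comp_step_in:
  assumes C: "category_of_partitions C" and "word_part w \<in> C" "q \<in> C" "length w = i + upp q"
    and "comp (word_part w) (tensor (idn i) q) = word_part w'"
  shows "word_part w' \<in> C"
  using comp_tensor_idn_in[OF C assms(2,3)] assms(4,5) by (simp add: word_part_def)

subsection \<open>Operations on words in a category of partitions\<close>

lemma word_part_cap_in:
  assumes C: "category_of_partitions C" and "word_part (u @ [a, a]) \<in> C"
  shows "word_part u \<in> C"
proof (rule word_part_comp_step_in[OF C assms(2)])
  let ?q = "invol pair_part"
  have q: "?q = (2, 0, {{(False, 0), (False, 1)}})"
    by (simp add: invol_def pair_part_def)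
  show "?q \<in> C" using C by (simp add: category_of_partitions_def)
  show "length (u @ [a, a]) = length u + upp ?q" by (simp add: q)
  show "comp (word_part (u @ [a, a])) (tensor (idn (length u)) ?q) = word_part u"
  proof (rule comp_word_part_tensor_idn[where \<phi> = id])
    fix X x y assume "X \<in> blk ?q" "x \<in> X" "y \<in> X"
    then show "tail_label id (u @ [a, a]) u (length u) x = tail_label id (u @ [a, a]) u (length u) y"
      by (auto simp: q tail_label_def nth_append)
  qed (simp_all add: q nth_append)
qed

lemma word_part_triple_in:
  assumes C: "category_of_partitions C" and b4: "four_block \<in> C" and "word_part (u @ [a]) \<in> C"
  shows "word_part (u @ [a, a, a]) \<in> C"
proof (rule word_part_comp_step_in[OF C assms(3)])
  let ?q = "rot_left_up four_block"
  have q: "?q = (1, 3, {{(False, 0), (True, 0), (True, 1), (True, 2)}})"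
    by (auto simp: rot_left_up_def rot_map_def four_block_def)
  show "?q \<in> C" using C b4 by (auto simp: category_of_partitions_def four_block_def)
  show "length (u @ [a]) = length u + upp ?q" by (simp add: q)
  show "comp (word_part (u @ [a])) (tensor (idn (length u)) ?q) = word_part (u @ [a, a, a])"
  proof (rule comp_word_part_tensor_idn[where \<phi> = id])
    fix X x y assume "X \<in> blk ?q" "x \<in> X" "y \<in> X"
    then show "tail_label id (u @ [a]) (u @ [a, a, a]) (length u) x
             = tail_label id (u @ [a]) (u @ [a, a, a]) (length u) y"
      by (auto simp: q tail_label_def nth_append)
  next
    fix k assume "k < low ?q"
    then show "\<exists>X\<in>blk ?q. \<exists>k'<upp ?q. (True, k) \<in> X \<and> (False, k') \<in> X"
      by (auto simp: q)
  qed (simp_all add: q nth_append)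
qed

lemma word_part_pair_positioner_in:
  assumes C: "category_of_partitions C" and \<rho>: "pair_positioner \<in> C" and "word_part (u @ [x, y, z]) \<in> C"
  defines "\<phi> \<equiv> \<lambda>c. if c = y then x else c"
  shows "word_part (map \<phi> u @ [\<phi> z, x, x]) \<in> C"
proof (rule word_part_comp_step_in[OF C assms(3) \<rho>])
  let ?w = "u @ [x, y, z]" and ?w' = "map \<phi> u @ [\<phi> z, x, x]" and ?i = "length u"
  let ?M = "middle_links ?w ?i pair_positioner"
  show "length ?w = ?i + upp pair_positioner" by (simp add: pair_positioner_def)
  show "comp (word_part ?w) (tensor (idn ?i) pair_positioner) = word_part ?w'"
  proof (rule comp_word_part_tensor_idn[where \<phi> = \<phi>])
    fix X v v' assume "X \<in> blk pair_positioner" "v \<in> X" "v' \<in> X"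
    then show "tail_label \<phi> ?w ?w' ?i v = tail_label \<phi> ?w ?w' ?i v'"
      by (auto simp: pair_positioner_def tail_label_def nth_append \<phi>_def)
  next
    fix k assume "k < low pair_positioner"
    then consider "k = 0" | "k = 1" | "k = 2" by (fastforce simp: pair_positioner_def numeral_3_eq_3)
    then show "\<exists>X\<in>blk pair_positioner. \<exists>k'<upp pair_positioner. (True, k) \<in> X \<and> (False, k') \<in> X"
      by cases (force simp: pair_positioner_def)+
  next
    fix j j' assume j: "j < length ?w" "j' < length ?w" "?w ! j \<noteq> ?w ! j'" "\<phi> (?w ! j) = \<phi> (?w ! j')"
    have link: "(?i, ?i + 1) \<in> ?M" "(?i + 1, ?i) \<in> ?M"
      unfolding middle_links_def pair_positioner_def by force+
    have letters: "?w ! ?i = x" "?w ! (?i + 1) = y" by (simp_all add: nth_append)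
    from j(3,4) have "?w ! j = x \<and> ?w ! j' = y \<or> ?w ! j = y \<and> ?w ! j' = x"
      by (auto simp: \<phi>_def split: if_splits)
    then show "(j, j') \<in> ?M\<^sup>*"
    proof
      assume "?w ! j = x \<and> ?w ! j' = y"
      then have "(j, ?i) \<in> ?M\<^sup>*" "(?i + 1, j') \<in> ?M\<^sup>*"
        using j(1,2) letters by (auto intro: middle_links_letter)
      then show ?thesis using link(1) by (meson rtrancl_into_rtrancl rtrancl_trans)
    next
      assume "?w ! j = y \<and> ?w ! j' = x"
      then have "(j, ?i + 1) \<in> ?M\<^sup>*" "(?i, j') \<in> ?M\<^sup>*"
        using j(1,2) letters by (auto intro: middle_links_letter)
      then show ?thesis using link(2) by (meson rtrancl_into_rtrancl rtrancl_trans)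
    qed
  qed (simp_all add: pair_positioner_def nth_append \<phi>_def)
qed

lemma tensor_word_part_pair_part:
  assumes "c \<notin> set w"
  shows "tensor (word_part w) pair_part = word_part (w @ [c, c])"
proof -
  let ?n = "length w" and ?w = "w @ [c, c]"
  have letter: "?w ! j = (if j < ?n then w ! j else c)" if "j < length ?w" for j
  proof (cases "j < ?n")
    case False
    with that have "j = ?n \<or> j = Suc ?n" by auto
    then show ?thesis by (auto simp: nth_append)
  qed (simp add: nth_append)
  have fresh: "{(True, j) | j. j < length ?w \<and> ?w ! j = c} = {(True, ?n), (True, Suc ?n)}"
    using assms nth_mem[of _ w] by (auto simp: letter split: if_splits)
  have old: "{(True, j) | j. j < length ?w \<and> ?w ! j = b} = {(True, j) | j. j < ?n \<and> w ! j = b}"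
    if "b \<in> set w" for b
    using assms that by (auto simp: letter split: if_splits)
  have "blk (word_part ?w) = insert {(True, ?n), (True, Suc ?n)} (blk (word_part w))"
    unfolding blk_word_part using fresh old by (simp cong: image_cong)
  then show ?thesis
    by (simp add: tensor_def pair_part_def shift_pt_def) (simp add: word_part_def)
qed

lemma word_part_pair_fresh_in:
  assumes C: "category_of_partitions C" and "word_part w \<in> C" "c \<notin> set w"
  shows "word_part (w @ [c, c]) \<in> C"
proof -
  have "tensor (word_part w) pair_part \<in> C" using C assms(2) unfolding category_of_partitions_def by blast
  then show ?thesis using tensor_word_part_pair_part[OF assms(3)] by simp
qed

lemma rotate_word_block:
  fixes w :: "nat list" and g :: "point \<Rightarrow> point"
  defines "g x \<equiv> if snd x = 0 then (True, length w) else (True, snd x - 1)"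
  shows "g ` {(True, j) | j. j < Suc (length w) \<and> (a # w) ! j = b}
       = {(True, t) | t. t < Suc (length w) \<and> (w @ [a]) ! t = b}"
proof (intro set_eqI iffI)
  fix z assume "z \<in> g ` {(True, j) | j. j < Suc (length w) \<and> (a # w) ! j = b}"
  then obtain j where j: "z = g (True, j)" "j < Suc (length w)" "(a # w) ! j = b" by blast
  show "z \<in> {(True, t) | t. t < Suc (length w) \<and> (w @ [a]) ! t = b}"
  proof (cases j)
    case 0
    then show ?thesis using j by (simp add: g_def)
  next
    case (Suc j')
    then show ?thesis using j by (simp add: g_def nth_append)
  qed
next
  fix z assume "z \<in> {(True, t) | t. t < Suc (length w) \<and> (w @ [a]) ! t = b}"
  then obtain t where t: "z = (True, t)" "t < Suc (length w)" "(w @ [a]) ! t = b" by blast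
  show "z \<in> g ` {(True, j) | j. j < Suc (length w) \<and> (a # w) ! j = b}"
  proof (cases "t < length w")
    case True
    with t show ?thesis by (intro image_eqI[of _ _ "(True, Suc t)"]) (auto simp: g_def nth_append)
  next
    case False
    with t show ?thesis by (intro image_eqI[of _ _ "(True, 0)"]) (auto simp: g_def nth_append)
  qed
qed

lemma word_part_rotate_in:
  assumes C: "category_of_partitions C" and "word_part (a # w) \<in> C"
  shows "word_part (w @ [a]) \<in> C"
proof -
  let ?p = "word_part (a # w)"
  let ?g = "\<lambda>x :: point. if snd x = 0 then (True, length w) else (True, snd x - 1)"
  have "rot_left_up ?p \<in> C" using C assms(2) by (simp add: category_of_partitions_def word_part_def)
  then have "rot_right_down (rot_left_up ?p) \<in> C"
    using C by (simp add: category_of_partitions_def rot_left_up_def rot_map_def word_part_def)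
  moreover have "rot_right_down (rot_left_up ?p) = (0, Suc (length w), (\<lambda>X. ?g ` X) ` blk ?p)"
    by (auto simp: rot_right_down_def rot_left_up_def rot_map_def word_part_def image_image
        intro!: image_cong)
  moreover have "(\<lambda>X. ?g ` X) ` blk ?p = blk (word_part (w @ [a]))"
    unfolding blk_word_part image_image length_Cons rotate_word_block by simp
  ultimately show ?thesis by (simp add: word_part_def)
qed

lemma word_part_append_swap_in:
  assumes C: "category_of_partitions C" and "word_part (u @ v) \<in> C"
  shows "word_part (v @ u) \<in> C"
  using assms(2)
proof (induction u arbitrary: v)
  case (Cons a u)
  then have "word_part (u @ v @ [a]) \<in> C" using word_part_rotate_in[OF C, of a "u @ v"] by simp
  then show ?case using Cons.IH[of "v @ [a]"] by simp
qed simp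

lemma word_part_rewrite_in:
  assumes C: "category_of_partitions C"
    and rewrite: "\<And>u. word_part (u @ s) \<in> C \<Longrightarrow> word_part (u @ t) \<in> C"
    and "word_part (u @ s @ v) \<in> C"
  shows "word_part (u @ t @ v) \<in> C"
proof -
  have "word_part ((v @ u) @ s) \<in> C"
    using word_part_append_swap_in[OF C, of "u @ s" v] assms(3) by simp
  then have "word_part ((v @ u) @ t) \<in> C" by (rule rewrite)
  then show ?thesis using word_part_append_swap_in[OF C, of v "u @ t"] by simp
qed

lemma word_part_replicate_shrink_in:
  assumes C: "category_of_partitions C" and "m \<le> k" "even (k - m)"
    and "word_part (u @ replicate k a @ v) \<in> C"
  shows "word_part (u @ replicate m a @ v) \<in> C"
proof -
  obtain d where "k - m = 2 * d" using assms(3) by (rule evenE)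
  then have k: "k = m + 2 * d" using assms(2) by simp
  have "word_part (u @ replicate (m + 2 * d) a @ v) \<in> C \<Longrightarrow> word_part (u @ replicate m a @ v) \<in> C"
  proof (induction d)
    case (Suc d)
    have "word_part (u @ [a, a] @ replicate (m + 2 * d) a @ v) \<in> C"
      using Suc.prems by (simp add: replicate_add[symmetric])
    moreover have "word_part (u' @ [a, a]) \<in> C \<Longrightarrow> word_part (u' @ []) \<in> C" for u'
      using word_part_cap_in[OF C] by simp
    ultimately have "word_part (u @ [] @ replicate (m + 2 * d) a @ v) \<in> C"
      using word_part_rewrite_in[OF C] by blast
    then show ?case using Suc.IH by simp
  qed simp
  then show ?thesis using assms(4) k by simp
qed

definition triples_closed :: "partition set \<Rightarrow> bool" where
  "triples_closed C \<longleftrightarrow> (\<forall>u a. word_part (u @ [a]) \<in> C \<longrightarrow> word_part (u @ [a, a, a]) \<in> C)"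

lemma triples_closed_four_block:
  "category_of_partitions C \<Longrightarrow> four_block \<in> C \<Longrightarrow> triples_closed C"
  unfolding triples_closed_def using word_part_triple_in by blast

lemma triples_closed_pair_positioner:
  assumes C: "category_of_partitions C" and \<rho>: "pair_positioner \<in> C"
  shows "triples_closed C"
  unfolding triples_closed_def
proof (intro allI impI)
  fix u a assume "word_part (u @ [a]) \<in> C"
  obtain c where c: "c \<notin> set (a # u)" using ex_new_if_finite[OF infinite_UNIV_nat] by blast
  then have "word_part (u @ [a, c, c]) \<in> C"
    using word_part_pair_fresh_in[OF C \<open>word_part (u @ [a]) \<in> C\<close>, of c] by simp
  then have "word_part (map (\<lambda>b. if b = c then a else b) u @ [a, a, a]) \<in> C"
    using word_part_pair_positioner_in[OF C \<rho>, of u a c c] by simp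
  moreover have "map (\<lambda>b. if b = c then a else b) u = u" using c by (induction u) auto
  ultimately show "word_part (u @ [a, a, a]) \<in> C" by simp
qed

lemma word_part_replicate_grow_in:
  assumes C: "category_of_partitions C" and T: "triples_closed C" and "1 \<le> m" "m \<le> k" "even (k - m)"
    and "word_part (u @ replicate m a @ v) \<in> C"
  shows "word_part (u @ replicate k a @ v) \<in> C"
proof -
  obtain d where "k - m = 2 * d" using assms(5) by (rule evenE)
  then have k: "k = m + 2 * d" using assms(4) by simp
  obtain n where m: "m = Suc n" using \<open>1 \<le> m\<close> by (cases m) auto
  have "word_part (u @ replicate (m + 2 * d) a @ v) \<in> C" for d
  proof (induction d)
    case (Suc d)
    have "word_part (u @ [a] @ replicate (n + 2 * d) a @ v) \<in> C" using Suc.IH m by simp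
    moreover have "word_part (u' @ [a]) \<in> C \<Longrightarrow> word_part (u' @ [a, a, a]) \<in> C" for u'
      using T by (simp add: triples_closed_def)
    ultimately have "word_part (u @ [a, a, a] @ replicate (n + 2 * d) a @ v) \<in> C"
      using word_part_rewrite_in[OF C] by blast
    then show ?case using m by simp
  qed (use assms(6) in simp)
  then show ?thesis using k by simp
qed

lemma word_part_move_pair_in:
  assumes C: "category_of_partitions C" and \<rho>: "pair_positioner \<in> C"
    and "word_part (u @ [a, a] @ v) \<in> C"
  shows "word_part (u @ v @ [a, a]) \<in> C"
  using assms(3)
proof (induction v arbitrary: u)
  case (Cons z v)
  have "word_part (u' @ [z, a, a]) \<in> C" if "word_part (u' @ [a, a, z]) \<in> C" for u'
    using word_part_pair_positioner_in[OF C \<rho> that] by (simp cong: if_cong)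
  then have "word_part ((u @ [z]) @ [a, a] @ v) \<in> C"
    using word_part_rewrite_in[OF C, of "[a, a, z]" "[z, a, a]" u v] Cons.prems by simp
  then show ?case using Cons.IH[of "u @ [z]"] by simp
qed simp

lemma word_part_insert_pair_in:
  assumes C: "category_of_partitions C" and \<rho>: "pair_positioner \<in> C" and "word_part (u @ v) \<in> C"
  shows "word_part (u @ [a, a] @ v) \<in> C"
proof -
  have append_pair: "word_part (w @ [a, a]) \<in> C" if w: "word_part w \<in> C" for w
  proof (cases "a \<in> set w")
    case False
    then show ?thesis using word_part_pair_fresh_in[OF C w] by simp
  next
    case True
    then obtain w1 w2 where w12: "w = w1 @ a # w2" by (meson split_list)
    have "word_part (w1 @ [a, a, a] @ w2) \<in> C"
      using word_part_rewrite_in[OF C, of "[a]" "[a, a, a]" w1 w2] w w12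
        triples_closed_pair_positioner[OF C \<rho>] unfolding triples_closed_def by simp
    then have "word_part ((w1 @ [a]) @ w2 @ [a, a]) \<in> C"
      using word_part_move_pair_in[OF C \<rho>, of "w1 @ [a]" a w2] by simp
    then show ?thesis using w12 by simp
  qed
  have "word_part ((v @ u) @ [a, a]) \<in> C"
    using append_pair word_part_append_swap_in[OF C assms(3)] by blast
  then show ?thesis using word_part_append_swap_in[OF C, of v "u @ [a, a]"] by simp
qed

subsection \<open>Words with runs of letters\<close>

lemma exp_word_Cons: "exp_word (x # xs) (k # ks) = replicate k x @ exp_word xs ks"
  by (simp add: exp_word_def)

lemma word_part_exp_word_runs_in:
  assumes "length ks = length xs"
    and runs: "\<And>k u v a. k \<in> set ks \<Longrightarrow> word_part (u @ replicate (f k) a @ v) \<in> C \<Longrightarrow>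
                 word_part (u @ replicate (g k) a @ v) \<in> C"
    and "word_part (u @ exp_word xs (map f ks) @ v) \<in> C"
  shows "word_part (u @ exp_word xs (map g ks) @ v) \<in> C"
  using assms
proof (induction xs arbitrary: ks u)
  case Nil
  then show ?case by (simp add: exp_word_def)
next
  case (Cons x xs)
  then obtain k ks' where ks: "ks = k # ks'" by (cases ks) auto
  have "word_part (u @ replicate (g k) x @ exp_word xs (map f ks') @ v) \<in> C"
    using Cons.prems(2)[of k] Cons.prems(3) ks by (simp add: exp_word_Cons)
  then have "word_part ((u @ replicate (g k) x) @ exp_word xs (map g ks') @ v) \<in> C"
    using Cons.IH[of ks' "u @ replicate (g k) x"] Cons.prems(1,2) ks by simp
  then show ?case using ks by (simp add: exp_word_Cons)
qed

lemma word_part_exp_word_parity_iff: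
  fixes xs ks :: "nat list"
  assumes C: "category_of_partitions C" and T: "triples_closed C"
    and len: "length ks = length xs" and pos: "\<forall>k\<in>set ks. 1 \<le> k"
  shows "word_part (exp_word xs ks) \<in> C \<longleftrightarrow>
         word_part (exp_word xs (map (\<lambda>k. if odd k then 1 else 2) ks)) \<in> C"
proof -
  let ?h = "\<lambda>k::nat. if odd k then 1 else (2::nat)"
  have h: "1 \<le> ?h k" "?h k \<le> k" "even (k - ?h k)" if "k \<in> set ks" for k
    using bspec[OF pos that] by (auto elim!: evenE oddE)
  have shrink: "word_part (u @ replicate (?h k) a @ v) \<in> C"
    if "k \<in> set ks" "word_part (u @ replicate (id k) a @ v) \<in> C" for k u v a
    using word_part_replicate_shrink_in[OF C h(2,3)[OF that(1)]] that(2) by simp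
  have grow: "word_part (u @ replicate (id k) a @ v) \<in> C"
    if "k \<in> set ks" "word_part (u @ replicate (?h k) a @ v) \<in> C" for k u v a
    using word_part_replicate_grow_in[OF C T h[OF that(1)] that(2)] by simp
  show ?thesis
    using word_part_exp_word_runs_in[where f = id and g = ?h and u = "[]" and v = "[]", OF len shrink]
      word_part_exp_word_runs_in[where f = ?h and g = id and u = "[]" and v = "[]", OF len grow]
    by auto
qed

lemma word_part_exp_word_even_runs_iff:
  fixes xs ks :: "nat list"
  assumes C: "category_of_partitions C" and \<rho>: "pair_positioner \<in> C" and len: "length ks = length xs"
  shows "word_part (exp_word xs (map (\<lambda>k. if odd k then 1 else 2) ks)) \<in> C \<longleftrightarrow>
         word_part (exp_word xs (map (\<lambda>k. if odd k then 1 else 0) ks)) \<in> C"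
proof -
  let ?f = "\<lambda>k::nat. if odd k then 1 else (2::nat)" and ?g = "\<lambda>k::nat. if odd k then 1 else (0::nat)"
  have shrink: "word_part (u @ replicate (?g k) a @ v) \<in> C"
    if "k \<in> set ks" "word_part (u @ replicate (?f k) a @ v) \<in> C" for k u v a
    using word_part_replicate_shrink_in[OF C, of "?g k" "?f k"] that(2) by simp
  have grow: "word_part (u @ replicate (?f k) a @ v) \<in> C"
    if "k \<in> set ks" "word_part (u @ replicate (?g k) a @ v) \<in> C" for k u v a
    using word_part_insert_pair_in[OF C \<rho>, of u v a] that(2) by (cases "even k") (simp_all add: numeral_2_eq_2)
  show ?thesis
    using word_part_exp_word_runs_in[where f = ?f and g = ?g and u = "[]" and v = "[]", OF len shrink]
      word_part_exp_word_runs_in[where f = ?g and g = ?f and u = "[]" and v = "[]", OF len grow]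
    by auto
qed

theorem mainTheorem3:
  fixes C :: "partition set" and xs ks :: "nat list"
  assumes "category_of_partitions C"
    and "length ks = length xs"
    and "\<forall>k\<in>set ks. k \<ge> 1"
    and "\<forall>j. Suc j < length xs \<longrightarrow> xs ! j \<noteq> xs ! Suc j"
  shows "(four_block \<in> C \<longrightarrow>
            (word_part (exp_word xs ks) \<in> C \<longleftrightarrow>
             word_part (exp_word xs (map (\<lambda>k. if odd k then 1 else 2) ks)) \<in> C))
       \<and> (pair_positioner \<in> C \<longrightarrow>
            (word_part (exp_word xs ks) \<in> C \<longleftrightarrow>
             word_part (exp_word xs (map (\<lambda>k. if odd k then 1 else 0) ks)) \<in> C))"
proof (intro conjI impI)
  assume "four_block \<in> C"
  then show "word_part (exp_word xs ks) \<in> C \<longleftrightarrow>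
             word_part (exp_word xs (map (\<lambda>k. if odd k then 1 else 2) ks)) \<in> C"
    using word_part_exp_word_parity_iff[OF assms(1) triples_closed_four_block assms(2,3)] assms(1)
    by blast
next
  assume \<rho>: "pair_positioner \<in> C"
  then show "word_part (exp_word xs ks) \<in> C \<longleftrightarrow>
             word_part (exp_word xs (map (\<lambda>k. if odd k then 1 else 0) ks)) \<in> C"
    using word_part_exp_word_parity_iff[OF assms(1) triples_closed_pair_positioner[OF assms(1) \<rho>] assms(2,3)]
      word_part_exp_word_even_runs_iff[OF assms(1) \<rho> assms(2)]
    by simp
qed

end
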